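(* Let $-3<\alpha\le 1$ and let $f\in\mathcal{SK}(\alpha)$. Let the logarithmic coefficients $\gamma_n$ of $f$ be defined by $\log\frac{f(z)}{z}=\sum_{n=1}^\infty 2\gamma_n z^n$ ($z\in\Delta$, branch vanishing at $0$). Then \[ \sum_{n=1}^\infty|\gamma_n|^2\le\frac{1}{4(3+\alpha)^2}\left[\frac{3\pi^2}{2}+6\alpha\,\mathrm{Li}_2\!\left(-\frac{\alpha}{3}\right)+\alpha^2\,\mathrm{Li}_2\!\left(\frac{\alpha^2}{9}\right)\right], \] where $\mathrm{Li}_2(z)=\sum_{n=1}^\infty z^n/n^2$. The inequality is sharp, i.e. equality holds for some function in $\mathcal{SK}(\alpha)$.
   Context: $\Delta=\{z:|z|<1\}$. For analytic $F,G$ on $\Delta$, $F\prec G$ means there is an analytic $w:\Delta\to\Delta$ with $w(0)=0$ and $F=G\circ w$ on $\Delta$. For $\alpha\in(-3,1]$, $\widetilde{q}_\alpha(z)=\dfrac{3}{3+(\alpha-3)z-\alpha z^2}$. The class $\mathcal{SK}(\alpha)$ consists of all analytic $f$ on $\Delta$ with $f(0)=0$, $f'(0)=1$ and $\dfrac{zf'(z)}{f(z)}\prec\widetilde{q}_\alpha(z)$ in $\Delta$. *)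

theory Defs
  imports "HOL-Analysis.Analysis"
begin

definition unit_disc :: "complex set" where
  "unit_disc = ball 0 1"

definition subordinate :: "(complex \<Rightarrow> complex) \<Rightarrow> (complex \<Rightarrow> complex) \<Rightarrow> bool" where
  "subordinate F G \<longleftrightarrow> F holomorphic_on unit_disc \<and> G holomorphic_on unit_disc \<and>
     (\<exists>w. w holomorphic_on unit_disc \<and> w ` unit_disc \<subseteq> unit_disc \<and> w 0 = 0 \<and>
          (\<forall>z\<in>unit_disc. F z = G (w z)))"

definition q_tilde :: "real \<Rightarrow> complex \<Rightarrow> complex" where
  "q_tilde \<alpha> z = 3 / (3 + (of_real \<alpha> - 3) * z - of_real \<alpha> * z^2)"

text \<open>z f'(z)/f(z), extended by its limit value 1 at z = 0 (f(0)=0, f'(0)=1).\<close>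
definition log_deriv_quot :: "(complex \<Rightarrow> complex) \<Rightarrow> complex \<Rightarrow> complex" where
  "log_deriv_quot f z = (if z = 0 then 1 else z * deriv f z / f z)"

definition SK :: "real \<Rightarrow> (complex \<Rightarrow> complex) set" where
  "SK \<alpha> = {f. f holomorphic_on unit_disc \<and> f 0 = 0 \<and> deriv f 0 = 1 \<and>
              (\<forall>z\<in>unit_disc. z \<noteq> 0 \<longrightarrow> f z \<noteq> 0) \<and>
              subordinate (log_deriv_quot f) (q_tilde \<alpha>)}"

definition log_branch :: "(complex \<Rightarrow> complex) \<Rightarrow> (complex \<Rightarrow> complex) \<Rightarrow> bool" where
  "log_branch f g \<longleftrightarrow> g holomorphic_on unit_disc \<and> g 0 = 0 \<and>
     (\<forall>z\<in>unit_disc. z \<noteq> 0 \<longrightarrow> exp (g z) = f z / z)"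

text \<open>Logarithmic coefficients: g(z) = sum 2 gamma_n z^n.\<close>
definition log_coeff :: "(complex \<Rightarrow> complex) \<Rightarrow> nat \<Rightarrow> complex" where
  "log_coeff g n = (deriv ^^ n) g 0 / of_nat (fact n) / 2"

definition Li2 :: "real \<Rightarrow> real" where
  "Li2 x = (\<Sum>n. x ^ (Suc n) / (real (Suc n))^2)"

definition SK_bound :: "real \<Rightarrow> real" where
  "SK_bound \<alpha> = 1 / (4 * (3 + \<alpha>)^2) *
     (3 * pi^2 / 2 + 6 * \<alpha> * Li2 (- \<alpha> / 3) + \<alpha>^2 * Li2 (\<alpha>^2 / 9))"

end

theory Submission
  imports Defs "HOL-Complex_Analysis.Complex_Analysis"
begin

text \<open>
  Put \<open>p = z f'/f\<close>. Subordination gives \<open>p = q_tilde \<alpha> \<circ> w\<close> for a Schwarz function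
  \<open>w\<close>, and differentiating \<open>log (f(z)/z) = \<Sum> 2 \<gamma>\<^sub>n z\<^sup>n\<close> gives
  \<open>p = 1 + z (log (f(z)/z))'\<close>, so the \<open>n\<close>-th Taylor coefficient of \<open>p\<close> is \<open>2 n \<gamma>\<^sub>n\<close>.
  Rogosinski's theorem bounds each partial sum \<open>\<Sum>k<N. |p\<^sub>k|\<^sup>2\<close> by the same
  partial sum for \<open>q_tilde \<alpha>\<close>; it is proved on discs of radius \<open>> 1\<close> by induction on \<open>N\<close>
  via Bessel's inequality on the unit circle, and transferred to the unit disc by dilation.
  Abel summation with the decreasing weights \<open>1/(4n\<^sup>2)\<close> turns this into
  \<open>\<Sum> |\<gamma>\<^sub>n|\<^sup>2 \<le> \<Sum> q\<^sub>n\<^sup>2/(4n\<^sup>2)\<close>, where \<open>q\<^sub>n = 3/(3+\<alpha>) + \<alpha>/(3+\<alpha>) (-\<alpha>/3)\<^sup>n\<close>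
  by partial fractions; expanding \<open>q\<^sub>n\<^sup>2\<close> produces the dilogarithms. Equality holds when
  \<open>w\<close> is the identity.
\<close>

section \<open>Taylor coefficients and the unit circle\<close>

abbreviation taylor_coeff :: "(complex \<Rightarrow> complex) \<Rightarrow> nat \<Rightarrow> complex" where
  "taylor_coeff f n \<equiv> fps_nth (fps_expansion f 0) n"

lemma taylor_coeff_eq: "taylor_coeff f n = (deriv ^^ n) f 0 / fact n"
  by (simp add: fps_expansion_def)

lemma taylor_coeff_0 [simp]: "taylor_coeff f 0 = f 0"
  by (simp add: taylor_coeff_eq)

lemma log_coeff_eq_taylor_coeff: "log_coeff g n = taylor_coeff g n / 2"
  by (simp add: log_coeff_def taylor_coeff_eq)

lemma taylor_coeff_polynomial:
  "taylor_coeff (\<lambda>z. \<Sum>j<N. a j * z ^ j) k = (if k < N then a k else 0)"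
proof -
  have "(\<lambda>z. \<Sum>j<N. a j * z ^ j) has_fps_expansion (\<Sum>j<N. fps_const (a j) * fps_X ^ j)"
    by (intro fps_expansion_intros)
  then show ?thesis
    by (simp add: fps_expansion_eqI fps_sum_nth if_distrib[of "\<lambda>x. _ * x"] sum.delta cong: if_cong)
qed

lemma taylor_coeff_mult:
  assumes "f analytic_on {0}" "g analytic_on {0}"
  shows "taylor_coeff (\<lambda>z. f z * g z) k = (\<Sum>i=0..k. taylor_coeff f i * taylor_coeff g (k - i))"
  using assms
  by (simp add: fps_expansion_eqI[OF has_fps_expansion_mult[OF analytic_at_imp_has_fps_expansion_0
        analytic_at_imp_has_fps_expansion_0]] fps_mult_nth)

lemma taylor_coeff_Suc_const_add:
  assumes "f analytic_on {0}"
  shows "taylor_coeff (\<lambda>z. c + f z) (Suc k) = taylor_coeff f (Suc k)"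
  using assms
  by (simp add: fps_expansion_eqI[OF has_fps_expansion_add[OF has_fps_expansion_const
        analytic_at_imp_has_fps_expansion_0]])

lemma taylor_coeff_Suc_mult_ident:
  assumes "f analytic_on {0}"
  shows "taylor_coeff (\<lambda>z. z * f z) (Suc k) = taylor_coeff f k"
  using assms
  by (simp add: fps_expansion_eqI[OF has_fps_expansion_mult[OF has_fps_expansion_fps_X
        analytic_at_imp_has_fps_expansion_0]])

lemma taylor_coeff_deriv:
  assumes "f analytic_on {0}"
  shows "taylor_coeff (deriv f) k = of_nat (Suc k) * taylor_coeff f (Suc k)"
  using assms
  by (simp add: fps_expansion_eqI[OF has_fps_expansion_deriv[OF analytic_at_imp_has_fps_expansion_0]])

lemma taylor_coeff_circle_integral:
  assumes holo: "F holomorphic_on ball 0 R" and R: "R > 1"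
  shows "((\<lambda>t. F (cis (2 * pi * t)) * cnj (cis (2 * pi * t)) ^ k) has_integral taylor_coeff F k) {0..1}"
proof -
  have "continuous_on (cball 0 1) F"
    by (rule continuous_on_subset[OF holomorphic_on_imp_continuous_on[OF holo]]) (use R in auto)
  moreover have "F holomorphic_on ball 0 1"
    by (rule holomorphic_on_subset[OF holo]) (use R in auto)
  ultimately have "((\<lambda>u. F u / (u - 0) ^ Suc k) has_contour_integral
      (2 * pi * \<i>) / fact k * (deriv ^^ k) F 0) (circlepath 0 1)"
    by (intro Cauchy_has_contour_integral_higher_derivative_circlepath) auto
  then have "((\<lambda>t. F (circlepath 0 1 t) / circlepath 0 1 t ^ Suc k *
      vector_derivative (circlepath 0 1) (at t within {0..1})) has_integral
      (2 * pi * \<i>) * taylor_coeff F k) {0..1}"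
    by (simp add: has_contour_integral_def taylor_coeff_eq)
  then have "((\<lambda>t. (2 * pi * \<i>) * (F (cis (2 * pi * t)) * cnj (cis (2 * pi * t)) ^ k)) has_integral
      (2 * pi * \<i>) * taylor_coeff F k) {0..1}"
  proof (rule has_integral_eq[rotated])
    fix t :: real assume "t \<in> {0..1}"
    define c where "c = cis (2 * pi * t)"
    have "circlepath 0 1 t = c"
      by (simp add: c_def circlepath cis_conv_exp mult_ac)
    moreover have "vector_derivative (circlepath 0 1) (at t within {0..1}) = 2 * pi * \<i> * c"
      using \<open>t \<in> {0..1}\<close> by (simp add: vector_derivative_circlepath01 c_def cis_conv_exp mult_ac)
    moreover have "cnj c = inverse c" and "c \<noteq> 0"
      by (simp_all add: c_def cis_cnj)
    ultimately show "F (circlepath 0 1 t) / circlepath 0 1 t ^ Suc k *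
        vector_derivative (circlepath 0 1) (at t within {0..1}) = (2 * pi * \<i>) * (F c * cnj c ^ k)"
      by (simp add: field_simps flip: power_mult_distrib)
  qed
  from has_integral_mult_right[OF this, of "inverse (2 * pi * \<i>)"] show ?thesis
    by (simp add: field_simps)
qed

lemma circle_integral_mult_cnj_polynomial:
  assumes "H holomorphic_on ball 0 R" "R > 1"
  shows "((\<lambda>t. H (cis (2 * pi * t)) * cnj (\<Sum>j<N. a j * cis (2 * pi * t) ^ j)) has_integral
           (\<Sum>j<N. taylor_coeff H j * cnj (a j))) {0..1}"
proof -
  have "((\<lambda>t. \<Sum>j<N. cnj (a j) * (H (cis (2 * pi * t)) * cnj (cis (2 * pi * t)) ^ j)) has_integral
      (\<Sum>j<N. cnj (a j) * taylor_coeff H j)) {0..1}"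
    by (intro has_integral_sum has_integral_mult_right taylor_coeff_circle_integral[OF assms]) auto
  then show ?thesis
    by (simp add: sum_distrib_left mult_ac)
qed

lemma mult_cnj_eq_of_real_norm_sq: "z * cnj z = complex_of_real (norm z ^ 2)"
  by (metis complex_norm_square of_real_power)

lemma parseval_polynomial:
  "((\<lambda>t. norm (\<Sum>j<N. a j * cis (2 * pi * t) ^ j) ^ 2) has_integral (\<Sum>j<N. norm (a j) ^ 2)) {0..1}"
proof -
  let ?P = "\<lambda>z. \<Sum>j<N. a j * z ^ j"
  have "((\<lambda>t. ?P (cis (2 * pi * t)) * cnj (?P (cis (2 * pi * t)))) has_integral
      (\<Sum>j<N. taylor_coeff ?P j * cnj (a j))) {0..1}"
    by (rule circle_integral_mult_cnj_polynomial[of _ 2]) (auto intro!: holomorphic_intros)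
  also have "(\<Sum>j<N. taylor_coeff ?P j * cnj (a j)) = complex_of_real (\<Sum>j<N. norm (a j) ^ 2)"
    by (simp add: taylor_coeff_polynomial mult_cnj_eq_of_real_norm_sq del: of_real_power)
  finally have "((\<lambda>t. complex_of_real (norm (?P (cis (2 * pi * t))) ^ 2)) has_integral
      complex_of_real (\<Sum>j<N. norm (a j) ^ 2)) {0..1}"
    by (simp only: mult_cnj_eq_of_real_norm_sq)
  from has_integral_Re[OF this] show ?thesis
    by simp
qed

lemma integrable_norm_sq_on_circle:
  assumes "H holomorphic_on ball 0 R" "R > 1"
  shows "(\<lambda>t. norm (H (cis (2 * pi * t))) ^ 2) integrable_on {0..1}"
proof -
  have "continuous_on (sphere 0 1) H"
    by (rule continuous_on_subset[OF holomorphic_on_imp_continuous_on[OF assms(1)]]) (use assms in auto)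
  moreover have "continuous_on {0..1} (\<lambda>t. cis (2 * pi * t))"
    by (intro continuous_intros)
  ultimately have "continuous_on {0..1} (\<lambda>t. H (cis (2 * pi * t)))"
    by (rule continuous_on_compose2) auto
  then show ?thesis
    by (intro integrable_continuous_interval continuous_intros)
qed

lemma bessel_inequality_circle:
  assumes holo: "H holomorphic_on ball 0 R" and R: "R > 1"
  shows "(\<Sum>k<N. norm (taylor_coeff H k) ^ 2) \<le> integral {0..1} (\<lambda>t. norm (H (cis (2 * pi * t))) ^ 2)"
proof -
  define S where "S = (\<Sum>k<N. norm (taylor_coeff H k) ^ 2)"
  define I where "I = integral {0..1} (\<lambda>t. norm (H (cis (2 * pi * t))) ^ 2)"
  let ?H = "\<lambda>t. H (cis (2 * pi * t))"
  let ?P = "\<lambda>t. \<Sum>k<N. taylor_coeff H k * cis (2 * pi * t) ^ k"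
  have norm_diff_sq: "norm (x - y) ^ 2 = norm x ^ 2 - 2 * Re (x * cnj y) + norm y ^ 2" for x y :: complex
    unfolding cmod_power2 by (simp add: power2_eq_square algebra_simps)
  have "((\<lambda>t. norm (?H t) ^ 2) has_integral I) {0..1}"
    unfolding I_def using integrable_norm_sq_on_circle[OF holo R] by (simp add: has_integral_integral)
  moreover have "((\<lambda>t. ?H t * cnj (?P t)) has_integral complex_of_real S) {0..1}"
    using circle_integral_mult_cnj_polynomial[OF holo R, where a = "taylor_coeff H" and N = N]
    by (simp add: S_def mult_cnj_eq_of_real_norm_sq del: of_real_power)
  from has_integral_Re[OF this] have "((\<lambda>t. Re (?H t * cnj (?P t))) has_integral S) {0..1}"
    by simp
  moreover have "((\<lambda>t. norm (?P t) ^ 2) has_integral S) {0..1}"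
    unfolding S_def by (rule parseval_polynomial)
  ultimately have "((\<lambda>t. norm (?H t - ?P t) ^ 2) has_integral (I - 2 * S + S)) {0..1}"
    unfolding norm_diff_sq by (intro has_integral_add has_integral_diff has_integral_mult_right)
  then have "0 \<le> I - 2 * S + S"
    by (rule has_integral_nonneg) simp
  then show ?thesis
    by (simp add: S_def I_def)
qed

section \<open>Rogosinski's inequality\<close>

lemma sum_sq_taylor_coeff_mult_le:
  assumes R: "R > 1" and holw: "w holomorphic_on ball 0 R" and w0: "w 0 = 0"
    and w_le_1: "\<And>z. norm z = 1 \<Longrightarrow> norm (w z) \<le> 1"
    and holG: "G holomorphic_on ball 0 R"
  shows "(\<Sum>k<Suc N. norm (taylor_coeff (\<lambda>z. w z * G z) k) ^ 2) \<le> (\<Sum>k<N. norm (taylor_coeff G k) ^ 2)"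
proof -
  define P where "P = (\<lambda>z. \<Sum>k<N. taylor_coeff G k * z ^ k)"
  have holP: "P holomorphic_on ball 0 R"
    unfolding P_def by (intro holomorphic_intros)
  have analytic: "f analytic_on {0}" if "f holomorphic_on ball 0 R" for f
    using holomorphic_on_imp_analytic_at[OF that open_ball] R by simp
  \<comment> \<open>As \<open>w 0 = 0\<close>, the first \<open>N + 1\<close> coefficients of \<open>w G\<close> see only the first \<open>N\<close> ones of \<open>G\<close>.\<close>
  have "taylor_coeff (\<lambda>z. w z * G z) k = taylor_coeff (\<lambda>z. w z * P z) k" if "k \<le> N" for k
    unfolding taylor_coeff_mult[OF analytic[OF holw] analytic[OF holG]]
      taylor_coeff_mult[OF analytic[OF holw] analytic[OF holP]]
  proof (intro sum.cong refl)
    fix i assume "i \<in> {0..k}"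
    with that show "taylor_coeff w i * taylor_coeff G (k - i) = taylor_coeff w i * taylor_coeff P (k - i)"
      by (cases "i = 0") (auto simp: P_def taylor_coeff_polynomial w0)
  qed
  then have "(\<Sum>k<Suc N. norm (taylor_coeff (\<lambda>z. w z * G z) k) ^ 2)
      = (\<Sum>k<Suc N. norm (taylor_coeff (\<lambda>z. w z * P z) k) ^ 2)"
    by (intro sum.cong) auto
  also have "\<dots> \<le> integral {0..1} (\<lambda>t. norm (w (cis (2 * pi * t)) * P (cis (2 * pi * t))) ^ 2)"
    by (rule bessel_inequality_circle[OF _ R]) (intro holomorphic_intros holw holP)
  also have "\<dots> \<le> integral {0..1} (\<lambda>t. norm (P (cis (2 * pi * t))) ^ 2)"
  proof (rule integral_le)
    show "(\<lambda>t. norm (w (cis (2 * pi * t)) * P (cis (2 * pi * t))) ^ 2) integrable_on {0..1}"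
      by (rule integrable_norm_sq_on_circle[OF _ R]) (intro holomorphic_intros holw holP)
    show "(\<lambda>t. norm (P (cis (2 * pi * t))) ^ 2) integrable_on {0..1}"
      by (rule integrable_norm_sq_on_circle[OF holP R])
  next
    fix t :: real
    have "norm (w (cis (2 * pi * t))) \<le> 1"
      by (rule w_le_1) simp
    then show "norm (w (cis (2 * pi * t)) * P (cis (2 * pi * t))) ^ 2 \<le> norm (P (cis (2 * pi * t))) ^ 2"
      by (simp add: norm_mult mult_left_le_one_le power_mono)
  qed
  also have "\<dots> = (\<Sum>k<N. norm (taylor_coeff G k) ^ 2)"
    unfolding P_def by (rule integral_unique[OF parseval_polynomial])
  finally show ?thesis .
qed

lemma rogosinski_partial_sums_ball:
  assumes R: "R > 1" and holw: "w holomorphic_on ball 0 R" and w0: "w 0 = 0"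
    and w_le: "\<And>z. z \<in> ball 0 R \<Longrightarrow> norm (w z) \<le> norm z"
    and holF: "F holomorphic_on ball 0 R"
  shows "(\<Sum>k<N. norm (taylor_coeff (\<lambda>z. F (w z)) k) ^ 2) \<le> (\<Sum>k<N. norm (taylor_coeff F k) ^ 2)"
  using holF
proof (induction N arbitrary: F)
  case 0
  then show ?case by simp
next
  case (Suc N)
  \<comment> \<open>\<open>F = F 0 + z F1\<close> and \<open>F \<circ> w = F 0 + w (F1 \<circ> w)\<close>: the second summand is controlled by
    \<open>sum_sq_taylor_coeff_mult_le\<close>, then by the induction hypothesis for \<open>F1\<close>.\<close>
  have analytic: "f analytic_on {0}" if "f holomorphic_on ball 0 R" for f
    using holomorphic_on_imp_analytic_at[OF that open_ball] R by simp
  have w_maps: "w ` ball 0 R \<subseteq> ball 0 R"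
    using w_le by fastforce
  define F1 where "F1 = (\<lambda>z. if z = 0 then deriv F 0 else (F z - F 0) / (z - 0))"
  define G where "G = (\<lambda>z. F1 (w z))"
  have holF1: "F1 holomorphic_on ball 0 R"
    unfolding F1_def by (rule pole_lemma_open[OF Suc.prems open_ball])
  have holG: "G holomorphic_on ball 0 R"
    unfolding G_def using holomorphic_on_compose_gen[OF holw holF1 w_maps] by (simp add: o_def)
  have F_eq: "F z = F 0 + z * F1 z" for z
    by (simp add: F1_def)
  have coeff_F: "taylor_coeff F (Suc k) = taylor_coeff F1 k" for k
    by (subst F_eq[abs_def]) (simp add: taylor_coeff_Suc_const_add taylor_coeff_Suc_mult_ident
        analytic holF1 analytic_on_mult analytic_intros)
  have coeff_Fw: "taylor_coeff (\<lambda>z. F (w z)) (Suc k) = taylor_coeff (\<lambda>z. w z * G z) (Suc k)" for k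
  proof -
    have "F (w z) = F 0 + w z * G z" for z
      unfolding G_def by (rule F_eq)
    then show ?thesis
      by (simp add: taylor_coeff_Suc_const_add analytic holw holG analytic_on_mult)
  qed
  have "(\<Sum>k<Suc N. norm (taylor_coeff (\<lambda>z. F (w z)) k) ^ 2)
      = norm (F 0) ^ 2 + (\<Sum>k<Suc N. norm (taylor_coeff (\<lambda>z. w z * G z) k) ^ 2)"
    by (simp add: sum.lessThan_Suc_shift coeff_Fw w0 del: sum.lessThan_Suc)
  also have "(\<Sum>k<Suc N. norm (taylor_coeff (\<lambda>z. w z * G z) k) ^ 2) \<le> (\<Sum>k<N. norm (taylor_coeff G k) ^ 2)"
    by (rule sum_sq_taylor_coeff_mult_le[OF R holw w0 _ holG]) (metis R mem_ball_0 w_le)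
  also have "(\<Sum>k<N. norm (taylor_coeff G k) ^ 2) \<le> (\<Sum>k<N. norm (taylor_coeff F1 k) ^ 2)"
    unfolding G_def by (rule Suc.IH[OF holF1])
  also have "norm (F 0) ^ 2 + (\<Sum>k<N. norm (taylor_coeff F1 k) ^ 2) = (\<Sum>k<Suc N. norm (taylor_coeff F k) ^ 2)"
    by (simp add: sum.lessThan_Suc_shift coeff_F del: sum.lessThan_Suc)
  finally show ?case
    by simp
qed

lemma taylor_coeff_dilation:
  assumes holF: "F holomorphic_on ball 0 r" and r: "r > 0"
  shows "taylor_coeff (\<lambda>z. F (c * z)) k = c ^ k * taylor_coeff F k"
proof -
  have "(deriv ^^ k) (\<lambda>z. F (c * z)) 0 = c ^ k * (deriv ^^ k) F (c * 0)"
  proof (rule higher_deriv_compose_linear[OF holF open_ball open_ball])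
    have "0 < r / (norm c + 1)"
      using r by (intro divide_pos_pos) (auto intro: add_nonneg_pos)
    then show "0 \<in> ball 0 (r / (norm c + 1))"
      by simp
  next
    fix z :: complex assume "z \<in> ball 0 (r / (norm c + 1))"
    then have "(norm c + 1) * norm z < r"
      by (simp add: field_simps add_pos_nonneg)
    moreover have "norm c * norm z \<le> (norm c + 1) * norm z"
      by (simp add: mult_right_mono)
    ultimately show "c * z \<in> ball 0 r"
      by (simp add: norm_mult)
  qed
  then show ?thesis
    by (simp add: taylor_coeff_eq)
qed

lemma rogosinski_partial_sums_dilated:
  assumes holq: "q holomorphic_on ball 0 1" and holw: "w holomorphic_on ball 0 1"
    and w_maps: "w ` ball 0 1 \<subseteq> ball 0 1" and w0: "w 0 = 0" and \<rho>: "0 < \<rho>" "\<rho> < 1"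
  shows "(\<Sum>k<N. (\<rho> ^ k) ^ 2 * norm (taylor_coeff (\<lambda>z. q (w z)) k) ^ 2) \<le> (\<Sum>k<N. norm (taylor_coeff q k) ^ 2)"
proof -
  define R where "R = 1 / \<rho>"
  have R: "R > 1"
    using \<rho> by (simp add: R_def)
  have dilate_maps: "(\<lambda>z. of_real \<rho> * z) ` ball 0 R \<subseteq> ball (0::complex) 1"
    using \<rho> by (auto simp: R_def norm_mult field_simps)
  have holqw: "(\<lambda>z. q (w z)) holomorphic_on ball 0 1"
    using holomorphic_on_compose_gen[OF holw holq w_maps] by (simp add: o_def)
  define w' where "w' = (\<lambda>z. w (of_real \<rho> * z) / of_real \<rho>)"
  define q' where "q' = (\<lambda>z. q (of_real \<rho> * z))"
  have holw': "w' holomorphic_on ball 0 R"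
    using holomorphic_on_compose_gen[OF _ holw dilate_maps] \<rho>
    unfolding w'_def by (intro holomorphic_intros) (auto simp: o_def intro: holomorphic_intros)
  have holq': "q' holomorphic_on ball 0 R"
    using holomorphic_on_compose_gen[OF _ holq dilate_maps]
    unfolding q'_def by (auto simp: o_def intro: holomorphic_intros)
  have w'_le: "norm (w' z) \<le> norm z" if "z \<in> ball 0 R" for z
  proof -
    have "norm (w (of_real \<rho> * z)) \<le> norm (of_real \<rho> * z)"
      using Schwarz_Lemma(1)[OF holw w0, of "of_real \<rho> * z"] w_maps dilate_maps that by force
    then show ?thesis
      using \<rho> by (simp add: w'_def norm_mult norm_divide field_simps)
  qed
  have "q' (w' z) = q (w (of_real \<rho> * z))" for z
    using \<rho> by (simp add: q'_def w'_def)
  then have "(\<Sum>k<N. norm (taylor_coeff (\<lambda>z. q (w (of_real \<rho> * z))) k) ^ 2) \<le> (\<Sum>k<N. norm (taylor_coeff q' k) ^ 2)"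
    using rogosinski_partial_sums_ball[OF R holw' _ w'_le holq', of N] w0 by (simp add: w'_def)
  then have "(\<Sum>k<N. (\<rho> ^ k) ^ 2 * norm (taylor_coeff (\<lambda>z. q (w z)) k) ^ 2)
      \<le> (\<Sum>k<N. (\<rho> ^ k) ^ 2 * norm (taylor_coeff q k) ^ 2)"
    using \<rho> unfolding q'_def
    by (simp add: taylor_coeff_dilation[OF holqw] taylor_coeff_dilation[OF holq] norm_mult norm_power
        power_mult_distrib)
  also have "\<dots> \<le> (\<Sum>k<N. norm (taylor_coeff q k) ^ 2)"
    using \<rho> by (intro sum_mono mult_left_le_one_le) (auto simp: power_le_one)
  finally show ?thesis .
qed

lemma rogosinski_partial_sums:
  assumes "q holomorphic_on ball 0 1" "w holomorphic_on ball 0 1"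
    and "w ` ball 0 1 \<subseteq> ball 0 1" "w 0 = 0"
  shows "(\<Sum>k<N. norm (taylor_coeff (\<lambda>z. q (w z)) k) ^ 2) \<le> (\<Sum>k<N. norm (taylor_coeff q k) ^ 2)"
proof -
  let ?S = "\<lambda>\<rho>::real. \<Sum>k<N. (\<rho> ^ k) ^ 2 * norm (taylor_coeff (\<lambda>z. q (w z)) k) ^ 2"
  have "(?S \<longlongrightarrow> ?S 1) (at_left 1)"
    by (intro tendsto_intros)
  moreover have "eventually (\<lambda>\<rho>. ?S \<rho> \<le> (\<Sum>k<N. norm (taylor_coeff q k) ^ 2)) (at_left 1)"
    using rogosinski_partial_sums_dilated[OF assms]
    by (auto simp: eventually_at_left[of 0 1] intro!: exI[of _ 0])
  ultimately have "?S 1 \<le> (\<Sum>k<N. norm (taylor_coeff q k) ^ 2)"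
    by (rule tendsto_upperbound) simp
  then show ?thesis
    by simp
qed

section \<open>Logarithmic coefficients\<close>

lemma log_deriv_quot_eq_log_branch:
  assumes holf: "f holomorphic_on ball 0 1" and branch: "log_branch f g" and z: "z \<in> ball 0 1"
  shows "log_deriv_quot f z = 1 + z * deriv g z"
proof (cases "z = 0")
  case True
  then show ?thesis
    by (simp add: log_deriv_quot_def)
next
  case False
  have holg: "g holomorphic_on ball 0 1" and exp_g: "\<And>u. u \<in> ball 0 1 \<Longrightarrow> u \<noteq> 0 \<Longrightarrow> exp (g u) = f u / u"
    using branch by (auto simp: log_branch_def unit_disc_def)
  have "f z \<noteq> 0"
    using exp_g[OF z False] False by (metis divide_eq_0_iff exp_not_eq_zero)
  have "((\<lambda>u. exp (g u)) has_field_derivative exp (g z) * deriv g z) (at z)"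
    using holomorphic_derivI[OF holg open_ball z] by (auto intro!: derivative_eq_intros)
  then have "((\<lambda>u. f u / u) has_field_derivative exp (g z) * deriv g z) (at z)"
    by (rule has_field_derivative_transform_within_open[of _ _ _ "ball 0 1 - {0}"])
       (use z False exp_g in auto)
  moreover have "((\<lambda>u. f u / u) has_field_derivative (deriv f z * z - f z) / z ^ 2) (at z)"
    using holomorphic_derivI[OF holf open_ball z] False
    by (auto intro!: derivative_eq_intros simp: power2_eq_square)
  ultimately have "f z / z * deriv g z = (deriv f z * z - f z) / z ^ 2"
    using DERIV_unique exp_g[OF z False] by metis
  with \<open>f z \<noteq> 0\<close> False show ?thesis
    by (simp add: log_deriv_quot_def field_simps power2_eq_square)
qed

lemma taylor_coeff_Suc_one_plus_mult_deriv:
  assumes holg: "g holomorphic_on ball 0 1" and p: "\<And>z. z \<in> ball 0 1 \<Longrightarrow> p z = 1 + z * deriv g z"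
  shows "taylor_coeff p (Suc k) = of_nat (Suc k) * taylor_coeff g (Suc k)"
proof -
  have analytic: "f analytic_on {0}" if "f holomorphic_on ball 0 1" for f
    using holomorphic_on_imp_analytic_at[OF that open_ball] by simp
  have holg': "deriv g holomorphic_on ball 0 1"
    by (rule holomorphic_deriv[OF holg open_ball])
  have "eventually (\<lambda>z. p z = 1 + z * deriv g z) (nhds 0)"
    using p eventually_nhds_in_open[of "ball 0 1" 0] by (auto elim!: eventually_mono)
  then have "taylor_coeff p (Suc k) = taylor_coeff (\<lambda>z. 1 + z * deriv g z) (Suc k)"
    by (simp add: fps_expansion_cong)
  also have "\<dots> = taylor_coeff (deriv g) k"
    by (simp add: taylor_coeff_Suc_const_add taylor_coeff_Suc_mult_ident analytic holg' analytic_on_mult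
        analytic_intros)
  also have "\<dots> = of_nat (Suc k) * taylor_coeff g (Suc k)"
    by (rule taylor_coeff_deriv[OF analytic[OF holg]])
  finally show ?thesis .
qed

lemma norm_log_coeff_Suc_sq:
  assumes "g holomorphic_on ball 0 1" "\<And>z. z \<in> ball 0 1 \<Longrightarrow> p z = 1 + z * deriv g z"
  shows "norm (log_coeff g (Suc n)) ^ 2 = norm (taylor_coeff p (Suc n)) ^ 2 / (4 * real (Suc n) ^ 2)"
proof -
  have "taylor_coeff p (Suc n) = of_nat (Suc n) * taylor_coeff g (Suc n)"
    by (rule taylor_coeff_Suc_one_plus_mult_deriv[OF assms])
  then show ?thesis
    unfolding log_coeff_eq_taylor_coeff
    by (simp add: norm_mult norm_divide power_mult_distrib power_divide del: of_nat_Suc)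
qed

lemma sum_mult_decreasing_weights_le:
  fixes x y c :: "nat \<Rightarrow> real"
  assumes partial_le: "\<And>m. (\<Sum>n<m. x n) \<le> (\<Sum>n<m. y n)"
    and decreasing: "\<And>n. c (Suc n) \<le> c n" and nonneg: "\<And>n. 0 \<le> c n"
  shows "(\<Sum>n<N. c n * x n) \<le> (\<Sum>n<N. c n * y n)"
proof -
  define D where "D m = (\<Sum>n<m. y n - x n)" for m
  have D_nonneg: "0 \<le> D m" for m
    using partial_le[of m] by (simp add: D_def sum_subtractf)
  have abel: "(\<Sum>n<N. c n * (y n - x n)) = c N * D N + (\<Sum>n<N. (c n - c (Suc n)) * D (Suc n))" for N
    by (induction N) (simp_all add: D_def algebra_simps)
  have "0 \<le> c N * D N + (\<Sum>n<N. (c n - c (Suc n)) * D (Suc n))"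
    using nonneg D_nonneg decreasing by (intro add_nonneg_nonneg sum_nonneg mult_nonneg_nonneg) auto
  then have "0 \<le> (\<Sum>n<N. c n * (y n - x n))"
    by (simp only: abel)
  then show ?thesis
    by (simp add: right_diff_distrib sum_subtractf)
qed

section \<open>The Taylor coefficients of \<open>q_tilde\<close>\<close>

lemma norm_mult_alpha_third_lt_1:
  fixes z :: complex
  assumes "norm z < 1" "-3 < \<alpha>" "\<alpha> \<le> 1"
  shows "norm (of_real (- \<alpha> / 3) * z) < 1"
proof -
  have "\<bar>\<alpha> / 3\<bar> \<le> 1"
    using assms by simp
  then have "norm (of_real (- \<alpha> / 3) * z) \<le> norm z"
    unfolding norm_mult by (intro mult_left_le_one_le) auto
  with assms(1) show ?thesis
    by simp
qed

lemma q_tilde_denominators_nonzero: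
  fixes z :: complex
  assumes "norm z < 1" "-3 < \<alpha>" "\<alpha> \<le> 1"
  shows "1 - z \<noteq> 0" "1 - of_real (- \<alpha> / 3) * z \<noteq> 0"
  using assms(1) norm_mult_alpha_third_lt_1[OF assms] by (metis norm_one order_less_irrefl right_minus_eq)+

lemma partial_fractions_two_poles:
  fixes a b c z :: "'a::field"
  assumes "a + b = 1" "a * c + b = 0" "1 - z \<noteq> 0" "1 - c * z \<noteq> 0"
  shows "1 / ((1 - z) * (1 - c * z)) = a / (1 - z) + b / (1 - c * z)"
proof -
  have "a * (1 - c * z) + b * (1 - z) = (a + b) - (a * c + b) * z"
    by (simp add: algebra_simps)
  with assms show ?thesis
    by (simp add: field_simps)
qed

lemma partial_fraction_weights:
  assumes "-3 < \<alpha>"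
  shows "of_real (3 / (3 + \<alpha>)) + of_real (\<alpha> / (3 + \<alpha>)) = (1::complex)"
    and "of_real (3 / (3 + \<alpha>)) * of_real (- \<alpha> / 3) + of_real (\<alpha> / (3 + \<alpha>)) = (0::complex)"
proof -
  have D: "3 + \<alpha> \<noteq> 0"
    using assms by simp
  \<comment> \<open>with \<open>3 + \<alpha>\<close> abstracted to \<open>D\<close>, as \<open>field_simps\<close> would expand \<open>(3 + \<alpha>)\<^sup>2\<close>\<close>
  have cancel: "3 / D * (- \<alpha> / 3) + \<alpha> / D = 0" if "D \<noteq> 0" for D :: real
    using that by (simp add: field_simps)
  have "3 / (3 + \<alpha>) + \<alpha> / (3 + \<alpha>) = 1"
    using D by (simp flip: add_divide_distrib)
  moreover note cancel[OF D]
  ultimately show "of_real (3 / (3 + \<alpha>)) + of_real (\<alpha> / (3 + \<alpha>)) = (1::complex)"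
    and "of_real (3 / (3 + \<alpha>)) * of_real (- \<alpha> / 3) + of_real (\<alpha> / (3 + \<alpha>)) = (0::complex)"
    by (simp_all only: of_real_add [symmetric] of_real_mult [symmetric] of_real_1 of_real_0)
qed

lemma q_tilde_partial_fractions:
  assumes z: "norm z < 1" and \<alpha>: "-3 < \<alpha>" "\<alpha> \<le> 1"
  shows "q_tilde \<alpha> z = of_real (3 / (3 + \<alpha>)) / (1 - z) + of_real (\<alpha> / (3 + \<alpha>)) / (1 - of_real (- \<alpha> / 3) * z)"
proof -
  have "3 + (of_real \<alpha> - 3) * z - of_real \<alpha> * z ^ 2 = 3 * ((1 - z) * (1 - of_real (- \<alpha> / 3) * z))"
    by (simp add: field_simps power2_eq_square)
  then have "q_tilde \<alpha> z = 1 / ((1 - z) * (1 - of_real (- \<alpha> / 3) * z))"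
    by (simp add: q_tilde_def)
  also have "\<dots> = of_real (3 / (3 + \<alpha>)) / (1 - z) + of_real (\<alpha> / (3 + \<alpha>)) / (1 - of_real (- \<alpha> / 3) * z)"
    using partial_fraction_weights(1,2)[OF \<alpha>(1)] q_tilde_denominators_nonzero[OF z \<alpha>]
    by (rule partial_fractions_two_poles)
  finally show ?thesis .
qed

lemma q_tilde_holomorphic:
  assumes "-3 < \<alpha>" "\<alpha> \<le> 1"
  shows "q_tilde \<alpha> holomorphic_on ball 0 1"
proof -
  have "(\<lambda>z. of_real (3 / (3 + \<alpha>)) / (1 - z) + of_real (\<alpha> / (3 + \<alpha>)) / (1 - of_real (- \<alpha> / 3) * z))
      holomorphic_on ball 0 1"
    using q_tilde_denominators_nonzero[OF _ assms] by (intro holomorphic_intros) auto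
  then show ?thesis
    by (rule holomorphic_transform) (simp add: q_tilde_partial_fractions[OF _ assms])
qed

definition q_coeff :: "real \<Rightarrow> nat \<Rightarrow> real" where
  "q_coeff \<alpha> n = 3 / (3 + \<alpha>) + \<alpha> / (3 + \<alpha>) * (- \<alpha> / 3) ^ n"

lemma q_coeff_0:
  assumes "\<alpha> \<noteq> -3"
  shows "q_coeff \<alpha> 0 = 1"
proof -
  have "3 + \<alpha> \<noteq> 0"
    using assms by linarith
  then show ?thesis
    by (simp add: q_coeff_def flip: add_divide_distrib)
qed

lemma taylor_coeff_q_tilde:
  assumes \<alpha>: "-3 < \<alpha>" "\<alpha> \<le> 1"
  shows "taylor_coeff (q_tilde \<alpha>) n = of_real (q_coeff \<alpha> n)"
proof -
  have "eventually (\<lambda>z. z \<in> ball 0 1) (nhds (0::complex))"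
    by (rule eventually_nhds_in_open) auto
  then have "eventually (\<lambda>z. (\<lambda>n. of_real (q_coeff \<alpha> n) * z ^ n) sums q_tilde \<alpha> z) (nhds 0)"
  proof (rule eventually_mono)
    fix z :: complex assume "z \<in> ball 0 1"
    then have z: "norm z < 1"
      by simp
    have "(\<lambda>n. of_real (3 / (3 + \<alpha>)) * z ^ n + of_real (\<alpha> / (3 + \<alpha>)) * (of_real (- \<alpha> / 3) * z) ^ n) sums
        (of_real (3 / (3 + \<alpha>)) * (1 / (1 - z)) + of_real (\<alpha> / (3 + \<alpha>)) * (1 / (1 - of_real (- \<alpha> / 3) * z)))"
      by (intro sums_add sums_mult geometric_sums z norm_mult_alpha_third_lt_1[OF z \<alpha>])
    also have "\<dots> = q_tilde \<alpha> z"
      by (simp add: q_tilde_partial_fractions[OF z \<alpha>])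
    finally show "(\<lambda>n. of_real (q_coeff \<alpha> n) * z ^ n) sums q_tilde \<alpha> z"
      by (simp only: q_coeff_def of_real_add of_real_mult of_real_power power_mult_distrib distrib_right
          mult.assoc)
  qed
  then have "q_tilde \<alpha> has_fps_expansion Abs_fps (\<lambda>n. of_real (q_coeff \<alpha> n))"
    by (intro has_fps_expansionI) simp
  then show ?thesis
    by (simp add: fps_expansion_eqI)
qed

lemma Li2_sums:
  assumes "\<bar>x\<bar> \<le> 1"
  shows "(\<lambda>n. x ^ Suc n / real (Suc n) ^ 2) sums Li2 x"
proof -
  have "summable (\<lambda>n. 1 / real (Suc n) ^ 2)"
    using inverse_squares_sums by (simp add: sums_iff)
  moreover have "norm (x ^ Suc n / real (Suc n) ^ 2) \<le> 1 / real (Suc n) ^ 2" for n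
  proof -
    have "\<bar>x\<bar> ^ Suc n \<le> 1"
      using assms by (intro power_le_one) auto
    then have "\<bar>x\<bar> ^ Suc n / real (Suc n) ^ 2 \<le> 1 / real (Suc n) ^ 2"
      by (intro divide_right_mono) auto
    then show ?thesis
      by (simp add: power_abs abs_divide abs_mult)
  qed
  ultimately have "summable (\<lambda>n. x ^ Suc n / real (Suc n) ^ 2)"
    by (rule summable_comparison_test')
  then show ?thesis
    unfolding Li2_def by (rule summable_sums)
qed

lemma SK_bound_sums:
  assumes \<alpha>: "-3 < \<alpha>" "\<alpha> \<le> 1"
  shows "(\<lambda>n. q_coeff \<alpha> (Suc n) ^ 2 / (4 * real (Suc n) ^ 2)) sums SK_bound \<alpha>"
proof -
  define A where "A = 3 / (3 + \<alpha>)"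
  define B where "B = \<alpha> / (3 + \<alpha>)"
  define x where "x = - \<alpha> / 3"
  have x: "\<bar>x\<bar> \<le> 1"
    using \<alpha> by (simp add: x_def)
  then have x2: "\<bar>x ^ 2\<bar> \<le> 1"
    by (simp add: abs_square_le_1)
  have "(\<lambda>n. A ^ 2 / 4 * (1 / real (Suc n) ^ 2) + A * B / 2 * (x ^ Suc n / real (Suc n) ^ 2)
      + B ^ 2 / 4 * ((x ^ 2) ^ Suc n / real (Suc n) ^ 2)) sums
      (A ^ 2 / 4 * (pi ^ 2 / 6) + A * B / 2 * Li2 x + B ^ 2 / 4 * Li2 (x ^ 2))"
    using inverse_squares_sums by (intro sums_add sums_mult Li2_sums x x2) simp
  moreover have "A ^ 2 / 4 * (1 / real (Suc n) ^ 2) + A * B / 2 * (x ^ Suc n / real (Suc n) ^ 2)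
      + B ^ 2 / 4 * ((x ^ 2) ^ Suc n / real (Suc n) ^ 2) = q_coeff \<alpha> (Suc n) ^ 2 / (4 * real (Suc n) ^ 2)" for n
  proof -
    have "q_coeff \<alpha> (Suc n) = A + B * x ^ Suc n"
      by (simp add: q_coeff_def A_def B_def x_def)
    moreover have "(x ^ 2) ^ Suc n = (x ^ Suc n) ^ 2"
      by (metis power_mult mult.commute)
    moreover have "A ^ 2 / 4 * (1 / m ^ 2) + A * B / 2 * (y / m ^ 2) + B ^ 2 / 4 * (y ^ 2 / m ^ 2)
        = (A + B * y) ^ 2 / (4 * m ^ 2)" if "m \<noteq> 0" for y m :: real
      using that by (simp add: field_simps power2_eq_square)
    ultimately show ?thesis
      by simp
  qed
  moreover have "A ^ 2 / 4 * (pi ^ 2 / 6) + A * B / 2 * Li2 x + B ^ 2 / 4 * Li2 (x ^ 2) = SK_bound \<alpha>"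
  proof -
    have collect: "(3 / D) ^ 2 / 4 * (p / 6) + 3 / D * (a / D) / 2 * L1 + (a / D) ^ 2 / 4 * L2
        = 1 / (4 * D ^ 2) * (3 * p / 2 + 6 * a * L1 + a ^ 2 * L2)" if "D \<noteq> 0" for D a p L1 L2 :: real
      using that by (simp add: field_simps power2_eq_square)
    have x_sq: "x ^ 2 = \<alpha> ^ 2 / 9"
      by (simp add: x_def power2_eq_square)
    show ?thesis
      unfolding x_sq unfolding SK_bound_def A_def B_def x_def by (rule collect) (use \<alpha> in simp)
  qed
  ultimately show ?thesis
    by simp
qed

section \<open>The bound and the extremal function\<close>

lemma SK_log_coeff_partial_sums_le:
  assumes \<alpha>: "-3 < \<alpha>" "\<alpha> \<le> 1" and f: "f \<in> SK \<alpha>" and branch: "log_branch f g"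
  shows "(\<Sum>n<N. norm (log_coeff g (Suc n)) ^ 2) \<le> SK_bound \<alpha>"
proof -
  define p where "p = log_deriv_quot f"
  obtain w where holw: "w holomorphic_on ball 0 1" and w_maps: "w ` ball 0 1 \<subseteq> ball 0 1"
    and w0: "w 0 = 0" and p_eq_qw: "\<And>z. z \<in> ball 0 1 \<Longrightarrow> p z = q_tilde \<alpha> (w z)"
    using f unfolding SK_def subordinate_def unit_disc_def p_def by blast
  have holf: "f holomorphic_on ball 0 1" and holg: "g holomorphic_on ball 0 1"
    using f branch by (auto simp: SK_def log_branch_def unit_disc_def)
  have p_eq: "p z = 1 + z * deriv g z" if "z \<in> ball 0 1" for z
    unfolding p_def by (rule log_deriv_quot_eq_log_branch[OF holf branch that])
  have "eventually (\<lambda>z. p z = q_tilde \<alpha> (w z)) (nhds 0)"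
    using p_eq_qw eventually_nhds_in_open[of "ball 0 1" 0] by (auto elim!: eventually_mono)
  then have "fps_expansion p 0 = fps_expansion (\<lambda>z. q_tilde \<alpha> (w z)) 0"
    by (rule fps_expansion_cong)
  then have rogosinski: "(\<Sum>k<M. norm (taylor_coeff p k) ^ 2) \<le> (\<Sum>k<M. norm (taylor_coeff (q_tilde \<alpha>) k) ^ 2)" for M
    using rogosinski_partial_sums[OF q_tilde_holomorphic[OF \<alpha>] holw w_maps w0] by simp
  \<comment> \<open>both constant terms equal \<open>1\<close>\<close>
  have partial_le: "(\<Sum>n<N. norm (taylor_coeff p (Suc n)) ^ 2) \<le> (\<Sum>n<N. q_coeff \<alpha> (Suc n) ^ 2)" for N
    using rogosinski[of "Suc N"] q_coeff_0[of \<alpha>] \<alpha>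
    by (simp add: sum.lessThan_Suc_shift taylor_coeff_q_tilde p_def log_deriv_quot_def del: sum.lessThan_Suc)
  define c where "c n = 1 / (4 * real (Suc n) ^ 2)" for n
  have "norm (log_coeff g (Suc n)) ^ 2 = c n * norm (taylor_coeff p (Suc n)) ^ 2" for n
    using norm_log_coeff_Suc_sq[OF holg p_eq, of n] by (simp add: c_def)
  then have "(\<Sum>n<N. norm (log_coeff g (Suc n)) ^ 2) = (\<Sum>n<N. c n * norm (taylor_coeff p (Suc n)) ^ 2)"
    by simp
  also have "\<dots> \<le> (\<Sum>n<N. c n * q_coeff \<alpha> (Suc n) ^ 2)"
    by (rule sum_mult_decreasing_weights_le[OF partial_le]) (auto simp: c_def frac_le)
  also have "\<dots> \<le> (\<Sum>n. c n * q_coeff \<alpha> (Suc n) ^ 2)"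
    using SK_bound_sums[OF \<alpha>] by (intro sum_le_suminf) (auto simp: c_def sums_iff)
  also have "\<dots> = SK_bound \<alpha>"
    using SK_bound_sums[OF \<alpha>] by (simp add: c_def sums_iff)
  finally show ?thesis .
qed

lemma one_minus_notin_nonpos_Reals:
  fixes u :: complex
  assumes "norm u < 1"
  shows "1 - u \<notin> \<real>\<^sub>\<le>\<^sub>0"
  using complex_Re_le_cmod[of u] assms by (auto simp: complex_nonpos_Reals_iff)

lemma has_field_derivative_Ln_combination:
  fixes a b c z :: complex
  assumes "1 - z \<notin> \<real>\<^sub>\<le>\<^sub>0" "1 - c * z \<notin> \<real>\<^sub>\<le>\<^sub>0"
  shows "((\<lambda>z. - a * Ln (1 - z) - b * Ln (1 - c * z)) has_field_derivative
           a / (1 - z) + b * c / (1 - c * z)) (at z)"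
proof -
  have "1 - z \<noteq> 0" "1 - c * z \<noteq> 0"
    using assms by auto
  with assms show ?thesis
    by (auto intro!: derivative_eq_intros simp: field_simps)
qed

lemma one_plus_mult_partial_fraction_derivative:
  fixes a b c z :: "'a::field"
  assumes "a + b = 1" "1 - z \<noteq> 0" "1 - c * z \<noteq> 0"
  shows "1 + z * (a / (1 - z) + b * c / (1 - c * z)) = a / (1 - z) + b / (1 - c * z)"
proof -
  have "z * (a / (1 - z)) = a / (1 - z) - a" "z * (b * c / (1 - c * z)) = b / (1 - c * z) - b"
    using assms(2,3) by (simp_all add: field_simps)
  moreover have "b = 1 - a"
    using assms(1) by (metis add.commute eq_diff_eq)
  ultimately show ?thesis
    by (simp add: distrib_left)
qed

definition SK_extremal_log :: "real \<Rightarrow> complex \<Rightarrow> complex" where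
  "SK_extremal_log \<alpha> z =
     - of_real (3 / (3 + \<alpha>)) * Ln (1 - z) - of_real (\<alpha> / (3 + \<alpha>)) * Ln (1 - of_real (- \<alpha> / 3) * z)"

definition SK_extremal :: "real \<Rightarrow> complex \<Rightarrow> complex" where
  "SK_extremal \<alpha> z = z * exp (SK_extremal_log \<alpha> z)"

lemma SK_extremal_log_holomorphic:
  assumes "-3 < \<alpha>" "\<alpha> \<le> 1"
  shows "SK_extremal_log \<alpha> holomorphic_on ball 0 1"
proof -
  have "1 - z \<notin> \<real>\<^sub>\<le>\<^sub>0" "1 - of_real (- \<alpha> / 3) * z \<notin> \<real>\<^sub>\<le>\<^sub>0" if "norm z < 1" for z :: complex
    by (rule one_minus_notin_nonpos_Reals, rule that)
       (rule one_minus_notin_nonpos_Reals, rule norm_mult_alpha_third_lt_1[OF that assms])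
  then show ?thesis
    unfolding SK_extremal_log_def by (intro holomorphic_intros) auto
qed

lemma one_plus_mult_deriv_SK_extremal_log:
  assumes z: "norm z < 1" and \<alpha>: "-3 < \<alpha>" "\<alpha> \<le> 1"
  shows "1 + z * deriv (SK_extremal_log \<alpha>) z = q_tilde \<alpha> z"
proof -
  have "deriv (SK_extremal_log \<alpha>) z = of_real (3 / (3 + \<alpha>)) / (1 - z)
      + of_real (\<alpha> / (3 + \<alpha>)) * of_real (- \<alpha> / 3) / (1 - of_real (- \<alpha> / 3) * z)"
    unfolding SK_extremal_log_def[abs_def]
    by (intro DERIV_imp_deriv has_field_derivative_Ln_combination one_minus_notin_nonpos_Reals z
        norm_mult_alpha_third_lt_1[OF z \<alpha>])
  then show ?thesis
    using one_plus_mult_partial_fraction_derivative[OF partial_fraction_weights(1)[OF \<alpha>(1)]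
        q_tilde_denominators_nonzero[OF z \<alpha>]]
    by (simp add: q_tilde_partial_fractions[OF z \<alpha>])
qed

lemma log_branch_SK_extremal:
  assumes "-3 < \<alpha>" "\<alpha> \<le> 1"
  shows "log_branch (SK_extremal \<alpha>) (SK_extremal_log \<alpha>)"
  using SK_extremal_log_holomorphic[OF assms]
  by (simp add: log_branch_def unit_disc_def SK_extremal_def SK_extremal_log_def)

lemma SK_extremal_in_SK:
  assumes \<alpha>: "-3 < \<alpha>" "\<alpha> \<le> 1"
  shows "SK_extremal \<alpha> \<in> SK \<alpha>"
proof -
  have holG: "SK_extremal_log \<alpha> holomorphic_on ball 0 1"
    by (rule SK_extremal_log_holomorphic[OF \<alpha>])
  then have holf: "SK_extremal \<alpha> holomorphic_on ball 0 1"
    unfolding SK_extremal_def[abs_def] by (intro holomorphic_intros)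
  have "SK_extremal_log \<alpha> 0 = 0"
    by (simp add: SK_extremal_log_def)
  then have "(SK_extremal \<alpha> has_field_derivative 1) (at 0)"
    using holomorphic_derivI[OF holG open_ball, of 0]
    unfolding SK_extremal_def[abs_def] by (auto intro!: derivative_eq_intros)
  then have "deriv (SK_extremal \<alpha>) 0 = 1"
    by (rule DERIV_imp_deriv)
  moreover have ldq: "log_deriv_quot (SK_extremal \<alpha>) z = q_tilde \<alpha> z" if "z \<in> ball 0 1" for z
    using log_deriv_quot_eq_log_branch[OF holf log_branch_SK_extremal[OF \<alpha>] that]
      one_plus_mult_deriv_SK_extremal_log[OF _ \<alpha>, of z] that by simp
  moreover have "log_deriv_quot (SK_extremal \<alpha>) holomorphic_on ball 0 1"
    by (rule holomorphic_transform[OF q_tilde_holomorphic[OF \<alpha>]]) (simp add: ldq)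
  then have "subordinate (log_deriv_quot (SK_extremal \<alpha>)) (q_tilde \<alpha>)"
    unfolding subordinate_def unit_disc_def using q_tilde_holomorphic[OF \<alpha>]
    by (intro conjI exI[of _ "\<lambda>z. z"]) (auto simp: ldq)
  ultimately show ?thesis
    using holf by (simp add: SK_def unit_disc_def SK_extremal_def)
qed

lemma SK_extremal_log_coeff_sums:
  assumes \<alpha>: "-3 < \<alpha>" "\<alpha> \<le> 1"
  shows "(\<lambda>n. norm (log_coeff (SK_extremal_log \<alpha>) (Suc n)) ^ 2) sums SK_bound \<alpha>"
proof -
  have "norm (log_coeff (SK_extremal_log \<alpha>) (Suc n)) ^ 2 = q_coeff \<alpha> (Suc n) ^ 2 / (4 * real (Suc n) ^ 2)" for n
    using norm_log_coeff_Suc_sq[OF SK_extremal_log_holomorphic[OF \<alpha>], of "q_tilde \<alpha>" n]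
      one_plus_mult_deriv_SK_extremal_log[OF _ \<alpha>]
    by (simp add: taylor_coeff_q_tilde[OF \<alpha>])
  then show ?thesis
    using SK_bound_sums[OF \<alpha>] by simp
qed

theorem theorem3p3:
  fixes \<alpha> :: real
  assumes "-3 < \<alpha>" and "\<alpha> \<le> 1"
  shows "(\<forall>f\<in>SK \<alpha>. \<forall>g. log_branch f g \<longrightarrow>
            summable (\<lambda>n. (cmod (log_coeff g (Suc n)))^2) \<and>
            (\<Sum>n. (cmod (log_coeff g (Suc n)))^2) \<le> SK_bound \<alpha>)
       \<and> (\<exists>f\<in>SK \<alpha>. \<exists>g. log_branch f g \<and>
            summable (\<lambda>n. (cmod (log_coeff g (Suc n)))^2) \<and>
            (\<Sum>n. (cmod (log_coeff g (Suc n)))^2) = SK_bound \<alpha>)"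
proof (intro conjI ballI allI impI)
  fix f g assume "f \<in> SK \<alpha>" "log_branch f g"
  note bound = SK_log_coeff_partial_sums_le[OF assms this]
  show "summable (\<lambda>n. (cmod (log_coeff g (Suc n)))^2)"
    by (rule summableI_nonneg_bounded[OF _ bound]) simp
  show "(\<Sum>n. (cmod (log_coeff g (Suc n)))^2) \<le> SK_bound \<alpha>"
    by (rule suminf_le_const[OF summableI_nonneg_bounded[OF _ bound] bound]) simp
next
  show "\<exists>f\<in>SK \<alpha>. \<exists>g. log_branch f g \<and>
            summable (\<lambda>n. (cmod (log_coeff g (Suc n)))^2) \<and>
            (\<Sum>n. (cmod (log_coeff g (Suc n)))^2) = SK_bound \<alpha>"
    using SK_extremal_in_SK[OF assms] log_branch_SK_extremal[OF assms] SK_extremal_log_coeff_sums[OF assms]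
    by (auto simp: sums_iff)
qed

end
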